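(* Let $(\mathcal{X},\mathcal{B},\lambda)$ be a measure space with $\lambda$ positive and $\sigma$-finite, $P$ a probability measure with density $f\in\mathcal{L}^2(\mathcal{X},\lambda)$ with respect to $\lambda$, and $X_1,\dots,X_N$ i.i.d. with law $P$. Let $f_1,\dots,f_m\in\mathcal{L}^2$ with $D_k=\int f_k^2d\lambda>0$, and assume there are known constants $C_k>0$ with $|f_k(x)|\le\sqrt{C_kD_k}$ for all $x\in\mathcal{X}$ and all $k$. Let $\varepsilon>0$ and, for each $k$, let $\beta_{k,1},\beta_{k,2}$ be real numbers with $0<\beta_{k,j}<\frac{N}{\sqrt{C_kD_k}}$, $j\in\{1,2\}$. Then with $P^{\otimes N}$-probability at least $1-\varepsilon$, for all $k\in\{1,\dots,m\}$, $$\alpha^{\inf}_k(\varepsilon,\beta_{k,1})\le\overline{\alpha}_k\le\alpha^{\sup}_k(\varepsilon,\beta_{k,2}),$$ where $$\alpha^{\sup}_k(\varepsilon,\beta)=\frac{N-N\exp\left[\frac1N\sum_{i=1}^N\log\left(1-\frac{\beta}{N}f_k(X_i)\right)-\frac{\log\frac{2m}{\varepsilon}}{N}\right]}{D_k\beta},$$ $$\alpha^{\inf}_k(\varepsilon,\beta)=\frac{N\exp\left[\frac1N\sum_{i=1}^N\log\left(1+\frac{\beta}{N}f_k(X_i)\right)-\frac{\log\frac{2m}{\varepsilon}}{N}\right]-N}{D_k\beta}.$$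
   Context: $\overline{\alpha}_k=\arg\min_{\alpha\in\mathbb{R}}\int(\alpha f_k-f)^2d\lambda=\frac{\int f_kf\,d\lambda}{D_k}$. *)

theory Defs
  imports "HOL-Probability.Probability"
begin

text \<open>Upper confidence bound; g i stands for f_k(X_i), i < N; D = D_k; m = number of functions.\<close>
definition alpha_sup :: "nat \<Rightarrow> nat \<Rightarrow> real \<Rightarrow> real \<Rightarrow> real \<Rightarrow> (nat \<Rightarrow> real) \<Rightarrow> real" where
  "alpha_sup N m D eps beta g =
     (real N - real N * exp ((1 / real N) * (\<Sum>i<N. ln (1 - beta / real N * g i))
                              - ln (2 * real m / eps) / real N)) / (D * beta)"

definition alpha_inf :: "nat \<Rightarrow> nat \<Rightarrow> real \<Rightarrow> real \<Rightarrow> real \<Rightarrow> (nat \<Rightarrow> real) \<Rightarrow> real" where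
  "alpha_inf N m D eps beta g =
     (real N * exp ((1 / real N) * (\<Sum>i<N. ln (1 + beta / real N * g i))
                    - ln (2 * real m / eps) / real N) - real N) / (D * beta)"

text \<open>The L2-projection coefficient: argmin over alpha of the integral of (alpha f_k - f)^2.\<close>
definition alpha_bar :: "'a measure \<Rightarrow> ('a \<Rightarrow> real) \<Rightarrow> ('a \<Rightarrow> real) \<Rightarrow> real" where
  "alpha_bar lam f fk = (\<integral>x. fk x * f x \<partial>lam) / (\<integral>x. (fk x)\<^sup>2 \<partial>lam)"

end

theory Submission
  imports Defs
begin

(* If |g| <= B and 0 < beta B < N, the factors 1 - (beta/N) g(X_i) are positive, so by
   independence their product Z has mean (1 - (beta/N) E g)^N.  Markov's inequality bounds the
   probability that Z exceeds 2m/eps times this mean by eps/(2m); taking logarithms, off this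
   event the exponential in alpha_sup is below 1 - (beta/N) E g.  Since E f_k = D_k alpha_bar_k,
   this is the upper bound for g = f_k and the lower bound for g = -f_k, and a union bound over
   the 2m events concludes. *)

lemma PiM_prod_Markov:
  fixes h :: "'a \<Rightarrow> real"
  assumes "sigma_finite_measure P" and "finite I" and h_int: "integrable P h"
    and h_nonneg: "\<And>x. x \<in> space P \<Longrightarrow> 0 \<le> h x"
    and mean_pos: "0 < (\<integral>x. h x \<partial>P)" and "0 < t"
  shows "measure (PiM I (\<lambda>_. P))
           {\<omega> \<in> space (PiM I (\<lambda>_. P)). t * (\<integral>x. h x \<partial>P) ^ card I \<le> (\<Prod>i\<in>I. h (\<omega> i))}
         \<le> 1 / t"
proof -
  interpret product_sigma_finite "\<lambda>_. P"
    using assms(1) by (simp add: product_sigma_finite_def)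
  have prod_int: "integrable (PiM I (\<lambda>_. P)) (\<lambda>\<omega>. \<Prod>i\<in>I. h (\<omega> i))"
    using \<open>finite I\<close> h_int by (rule product_integrable_prod)
  have "measure (PiM I (\<lambda>_. P))
          {\<omega> \<in> space (PiM I (\<lambda>_. P)). t * (\<integral>x. h x \<partial>P) ^ card I \<le> (\<Prod>i\<in>I. h (\<omega> i))}
        \<le> (\<integral>\<omega>. (\<Prod>i\<in>I. h (\<omega> i)) \<partial>PiM I (\<lambda>_. P)) / (t * (\<integral>x. h x \<partial>P) ^ card I)"
    using mean_pos \<open>0 < t\<close> h_nonneg
    by (intro integral_Markov_inequality_measure[OF prod_int sets.top] AE_I2 prod_nonneg)
       (auto simp: space_PiM)
  also have "\<dots> = 1 / t"
    using product_integral_prod[OF \<open>finite I\<close> h_int] mean_pos by simp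
  finally show ?thesis .
qed

lemma exp_mean_ln_less:
  fixes x :: "nat \<Rightarrow> real"
  assumes "0 < N" and x_pos: "\<And>i. i < N \<Longrightarrow> 0 < x i" and "0 < t" and "0 < a"
    and prod_less: "(\<Prod>i<N. x i) < t * a ^ N"
  shows "exp ((1 / real N) * (\<Sum>i<N. ln (x i)) - ln t / real N) < a"
proof -
  have "(\<Sum>i<N. ln (x i)) = ln (\<Prod>i<N. x i)"
    using x_pos by (intro ln_prod[symmetric]) (auto simp: less_imp_neq[symmetric])
  also have "\<dots> < ln (t * a ^ N)"
    using prod_less x_pos \<open>0 < t\<close> \<open>0 < a\<close> by (subst ln_less_cancel_iff) (auto intro!: prod_pos)
  also have "\<dots> = ln t + real N * ln a"
    using \<open>0 < t\<close> \<open>0 < a\<close> by (simp add: ln_mult ln_realpow)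
  finally have "(1 / real N) * (\<Sum>i<N. ln (x i)) - ln t / real N < ln a"
    using \<open>0 < N\<close> by (simp add: field_simps)
  then show ?thesis
    using \<open>0 < a\<close> by (metis exp_less_cancel_iff exp_ln)
qed

lemma (in prob_space) abs_bound_nonneg:
  fixes g :: "'a \<Rightarrow> real"
  assumes "\<And>x. x \<in> space M \<Longrightarrow> \<bar>g x\<bar> \<le> B"
  shows "0 \<le> B"
  using assms[of "SOME x. x \<in> space M"] not_empty by (metis abs_ge_zero order.trans some_in_eq)

lemma measure_exp_mean_ln_ge_mean:
  fixes h :: "'a \<Rightarrow> real"
  assumes "prob_space P" and h_int: "integrable P h" and h_pos: "\<And>x. x \<in> space P \<Longrightarrow> 0 < h x"
    and "0 < N" and "0 < t"
  defines "M \<equiv> PiM {..<N} (\<lambda>_. P)"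
  shows "measure M {\<omega> \<in> space M. (\<integral>x. h x \<partial>P)
                       \<le> exp ((1 / real N) * (\<Sum>i<N. ln (h (\<omega> i))) - ln t / real N)}
         \<le> 1 / t"
proof -
  interpret P: prob_space P by fact
  interpret M: prob_space M
    unfolding M_def by (rule prob_space_PiM) (rule \<open>prob_space P\<close>)
  have [measurable]: "h \<in> borel_measurable P"
    using h_int by blast
  define a where "a = (\<integral>x. h x \<partial>P)"
  have "0 < a"
    unfolding a_def using h_int h_pos by (intro P.expectation_greater AE_I2) auto
  define Markov_event where
    "Markov_event = {\<omega> \<in> space M. t * a ^ card {..<N} \<le> (\<Prod>i\<in>{..<N}. h (\<omega> i))}"
  have "{\<omega> \<in> space M. a \<le> exp ((1 / real N) * (\<Sum>i<N. ln (h (\<omega> i))) - ln t / real N)}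
        \<subseteq> Markov_event"
  proof safe
    fix \<omega> assume \<omega>: "\<omega> \<in> space M" "a \<le> exp ((1 / real N) * (\<Sum>i<N. ln (h (\<omega> i))) - ln t / real N)"
    have "0 < h (\<omega> i)" if "i < N" for i
      using \<omega>(1) that h_pos by (auto simp: M_def space_PiM)
    then have "\<not> (\<Prod>i<N. h (\<omega> i)) < t * a ^ N"
      using exp_mean_ln_less[of N "\<lambda>i. h (\<omega> i)" t a] \<omega>(2) \<open>0 < N\<close> \<open>0 < t\<close> \<open>0 < a\<close> by force
    then show "\<omega> \<in> Markov_event"
      using \<omega>(1) by (simp add: Markov_event_def not_less)
  qed
  moreover have "Markov_event \<in> sets M"
    unfolding Markov_event_def M_def by measurable
  moreover have "measure M Markov_event \<le> 1 / t"
    unfolding Markov_event_def M_def a_def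
    using h_int h_pos \<open>0 < a\<close>[unfolded a_def] \<open>0 < t\<close>
    by (intro PiM_prod_Markov) (auto simp: P.sigma_finite_measure less_imp_le)
  ultimately show ?thesis
    unfolding a_def by (meson M.finite_measure_mono order.trans)
qed

lemma measure_exp_mean_ln_affine_ge:
  fixes g :: "'a \<Rightarrow> real"
  assumes "prob_space P" and g_meas[measurable]: "g \<in> borel_measurable P"
    and g_bound: "\<And>x. x \<in> space P \<Longrightarrow> \<bar>g x\<bar> \<le> B"
    and "0 < beta" and "beta * B < real N" and "0 < t"
  defines "M \<equiv> PiM {..<N} (\<lambda>_. P)"
  defines "E \<equiv> {\<omega> \<in> space M. 1 - beta / real N * (\<integral>x. g x \<partial>P)
                   \<le> exp ((1 / real N) * (\<Sum>i<N. ln (1 - beta / real N * g (\<omega> i))) - ln t / real N)}"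
  shows "E \<in> sets M" and "measure M E \<le> 1 / t"
proof -
  interpret P: prob_space P by fact
  show "E \<in> sets M"
    unfolding E_def M_def by measurable
  have "0 \<le> B"
    using g_bound by (rule P.abs_bound_nonneg)
  then have "0 \<le> beta * B"
    using \<open>0 < beta\<close> by simp
  then have "0 < real N"
    using \<open>beta * B < real N\<close> by linarith
  define h where "h x = 1 - beta / real N * g x" for x
  have h_pos: "0 < h x" if "x \<in> space P" for x
  proof -
    have "beta / real N * g x \<le> beta * B / real N"
      using g_bound[OF that] \<open>0 < beta\<close> \<open>0 < real N\<close>
      by (simp add: divide_right_mono mult_left_mono)
    also have "\<dots> < 1"
      using \<open>beta * B < real N\<close> \<open>0 < real N\<close> by simp
    finally show ?thesis
      by (simp add: h_def)
  qed
  have g_int: "integrable P g"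
    using g_bound by (intro P.integrable_const_bound[where B = B]) auto
  then have h_int: "integrable P h"
    and h_mean: "(\<integral>x. h x \<partial>P) = 1 - beta / real N * (\<integral>x. g x \<partial>P)"
    by (simp_all add: h_def[abs_def] P.prob_space)
  have "measure M {\<omega> \<in> space M. (\<integral>x. h x \<partial>P)
                       \<le> exp ((1 / real N) * (\<Sum>i<N. ln (h (\<omega> i))) - ln t / real N)}
        \<le> 1 / t"
    unfolding M_def using \<open>prob_space P\<close> h_int h_pos \<open>0 < real N\<close> \<open>0 < t\<close>
    by (intro measure_exp_mean_ln_ge_mean) auto
  then show "measure M E \<le> 1 / t"
    unfolding h_mean unfolding E_def h_def .
qed

lemma le_alpha_sup:
  fixes g :: "nat \<Rightarrow> real"
  assumes "0 < N" and "0 < D" and "0 < beta"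
    and "exp ((1 / real N) * (\<Sum>i<N. ln (1 - beta / real N * g i)) - ln (2 * real m / eps) / real N)
         < 1 - beta / real N * (D * a)"
  shows "a \<le> alpha_sup N m D eps beta g"
proof -
  have "beta * (D * a) < real N - real N * exp ((1 / real N) * (\<Sum>i<N. ln (1 - beta / real N * g i))
                                                - ln (2 * real m / eps) / real N)"
    using assms(1,4) by (simp add: field_simps)
  then show ?thesis
    using assms(2,3) by (simp add: alpha_sup_def pos_le_divide_eq mult_ac)
qed

lemma alpha_inf_le:
  fixes g :: "nat \<Rightarrow> real"
  assumes "0 < N" and "0 < D" and "0 < beta"
    and "exp ((1 / real N) * (\<Sum>i<N. ln (1 + beta / real N * g i)) - ln (2 * real m / eps) / real N)
         < 1 + beta / real N * (D * a)"
  shows "alpha_inf N m D eps beta g \<le> a"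
proof -
  have "real N * exp ((1 / real N) * (\<Sum>i<N. ln (1 + beta / real N * g i)) - ln (2 * real m / eps) / real N)
        - real N < beta * (D * a)"
    using assms(1,4) by (simp add: field_simps)
  then show ?thesis
    using assms(2,3) by (simp add: alpha_inf_def pos_divide_le_eq mult_ac)
qed

lemma alpha_bounds_fail_rarely:
  fixes g :: "'a \<Rightarrow> real"
  assumes "prob_space P" and g_meas[measurable]: "g \<in> borel_measurable P"
    and g_bound: "\<And>x. x \<in> space P \<Longrightarrow> \<bar>g x\<bar> \<le> B"
    and beta1: "0 < beta1" "beta1 * B < real N" and beta2: "0 < beta2" "beta2 * B < real N"
    and "0 < D" and mean_eq: "(\<integral>x. g x \<partial>P) = D * a" and "0 < eps" and "0 < m"
  defines "M \<equiv> PiM {..<N} (\<lambda>_. P)"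
  shows "Measurable.pred M (\<lambda>\<omega>. alpha_inf N m D eps beta1 (\<lambda>i. g (\<omega> i)) \<le> a
                               \<and> a \<le> alpha_sup N m D eps beta2 (\<lambda>i. g (\<omega> i)))"
    and "\<exists>A \<in> sets M. measure M A \<le> eps / real m \<and>
           (\<forall>\<omega> \<in> space M - A. alpha_inf N m D eps beta1 (\<lambda>i. g (\<omega> i)) \<le> a
                               \<and> a \<le> alpha_sup N m D eps beta2 (\<lambda>i. g (\<omega> i)))"
proof -
  show "Measurable.pred M (\<lambda>\<omega>. alpha_inf N m D eps beta1 (\<lambda>i. g (\<omega> i)) \<le> a
                               \<and> a \<le> alpha_sup N m D eps beta2 (\<lambda>i. g (\<omega> i)))"
    unfolding alpha_inf_def alpha_sup_def M_def by measurable
  interpret P: prob_space P by fact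
  have "0 \<le> B"
    using g_bound by (rule P.abs_bound_nonneg)
  then have "0 \<le> beta1 * B"
    using beta1 by simp
  then have "0 < N"
    using beta1 by simp
  define t where "t = 2 * real m / eps"
  have "0 < t"
    using \<open>0 < eps\<close> \<open>0 < m\<close> by (simp add: t_def)
  define A_sup where "A_sup = {\<omega> \<in> space M. 1 - beta2 / real N * (D * a)
      \<le> exp ((1 / real N) * (\<Sum>i<N. ln (1 - beta2 / real N * g (\<omega> i))) - ln t / real N)}"
  define A_inf where "A_inf = {\<omega> \<in> space M. 1 + beta1 / real N * (D * a)
      \<le> exp ((1 / real N) * (\<Sum>i<N. ln (1 + beta1 / real N * g (\<omega> i))) - ln t / real N)}"
  have A_sup: "A_sup \<in> sets M" "measure M A_sup \<le> 1 / t"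
    using measure_exp_mean_ln_affine_ge[OF \<open>prob_space P\<close> g_meas g_bound beta2 \<open>0 < t\<close>]
    by (simp_all add: A_sup_def M_def mean_eq)
  have A_inf: "A_inf \<in> sets M" "measure M A_inf \<le> 1 / t"
    using measure_exp_mean_ln_affine_ge[of P "\<lambda>x. - g x" B beta1 N t] g_bound beta1 \<open>0 < t\<close>
    by (simp_all add: \<open>prob_space P\<close> A_inf_def M_def mean_eq)
  have "measure M (A_sup \<union> A_inf) \<le> eps / real m"
    using measure_Un_le[OF A_sup(1) A_inf(1)] A_sup(2) A_inf(2) by (simp add: t_def)
  moreover have "alpha_inf N m D eps beta1 (\<lambda>i. g (\<omega> i)) \<le> a
                 \<and> a \<le> alpha_sup N m D eps beta2 (\<lambda>i. g (\<omega> i))"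
    if "\<omega> \<in> space M - (A_sup \<union> A_inf)" for \<omega>
    using that \<open>0 < N\<close> \<open>0 < D\<close> beta1 beta2
    by (auto simp: A_sup_def A_inf_def t_def not_le intro!: le_alpha_sup alpha_inf_le)
  ultimately show "\<exists>A \<in> sets M. measure M A \<le> eps / real m \<and>
           (\<forall>\<omega> \<in> space M - A. alpha_inf N m D eps beta1 (\<lambda>i. g (\<omega> i)) \<le> a
                               \<and> a \<le> alpha_sup N m D eps beta2 (\<lambda>i. g (\<omega> i)))"
    using A_sup(1) A_inf(1) by blast
qed

lemma (in prob_space) prob_all_ge_by_union_bound:
  fixes \<delta> :: real
  assumes "finite I" and Q_meas: "\<And>i. i \<in> I \<Longrightarrow> Measurable.pred M (Q i)"
    and "\<And>i. i \<in> I \<Longrightarrow> \<exists>A \<in> events. prob A \<le> \<delta> \<and> (\<forall>x \<in> space M - A. Q i x)"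
  shows "1 - card I * \<delta> \<le> prob {x \<in> space M. \<forall>i \<in> I. Q i x}"
proof -
  obtain A where A: "\<And>i. i \<in> I \<Longrightarrow> A i \<in> events \<and> prob (A i) \<le> \<delta> \<and> (\<forall>x \<in> space M - A i. Q i x)"
    using assms(3) by metis
  have "prob (\<Union>i\<in>I. A i) \<le> (\<Sum>i\<in>I. prob (A i))"
    using \<open>finite I\<close> A by (intro measure_UNION_le) auto
  also have "\<dots> \<le> card I * \<delta>"
    using A sum_bounded_above[of I "\<lambda>i. prob (A i)" \<delta>] by simp
  finally have "1 - card I * \<delta> \<le> prob (space M - (\<Union>i\<in>I. A i))"
    using \<open>finite I\<close> A by (subst prob_compl) auto
  also have "\<dots> \<le> prob {x \<in> space M. \<forall>i \<in> I. Q i x}"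
  proof (rule finite_measure_mono)
    show "space M - (\<Union>i\<in>I. A i) \<subseteq> {x \<in> space M. \<forall>i \<in> I. Q i x}"
      using A by blast
    show "{x \<in> space M. \<forall>i \<in> I. Q i x} \<in> events"
      using \<open>finite I\<close> Q_meas by (simp add: pred_intros_finite flip: pred_def)
  qed
  finally show ?thesis .
qed

lemma integral_density_eq_alpha_bar:
  fixes f g :: "'a \<Rightarrow> real"
  assumes "f \<in> borel_measurable lam" and "AE x in lam. 0 \<le> f x" and "g \<in> borel_measurable lam"
    and "(\<integral>x. (g x)\<^sup>2 \<partial>lam) \<noteq> 0"
  shows "(\<integral>x. g x \<partial>density lam (\<lambda>x. ennreal (f x))) = (\<integral>x. (g x)\<^sup>2 \<partial>lam) * alpha_bar lam f g"
  using integral_density[OF assms(3,1,2)] assms(4) by (simp add: alpha_bar_def mult.commute)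

theorem theorem4:
  fixes lam :: "'a measure" and P :: "'a measure" and f :: "'a \<Rightarrow> real"
    and N m :: nat and fk :: "nat \<Rightarrow> 'a \<Rightarrow> real" and C D beta1 beta2 :: "nat \<Rightarrow> real"
    and eps :: real
  assumes sf: "sigma_finite_measure lam"
    and f_meas: "f \<in> borel_measurable lam"
    and f_nonneg: "AE x in lam. f x \<ge> 0"
    and f_L2: "integrable lam (\<lambda>x. (f x)\<^sup>2)"
    and P_def: "P = density lam (\<lambda>x. ennreal (f x))"
    and P_prob: "prob_space P"
    and fk_meas: "\<And>k. k \<in> {1..m} \<Longrightarrow> fk k \<in> borel_measurable lam"
    and fk_L2: "\<And>k. k \<in> {1..m} \<Longrightarrow> integrable lam (\<lambda>x. (fk k x)\<^sup>2)"
    and D_def: "\<And>k. k \<in> {1..m} \<Longrightarrow> D k = (\<integral>x. (fk k x)\<^sup>2 \<partial>lam)"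
    and D_pos: "\<And>k. k \<in> {1..m} \<Longrightarrow> D k > 0"
    and C_pos: "\<And>k. k \<in> {1..m} \<Longrightarrow> C k > 0"
    and fk_bound: "\<And>k x. k \<in> {1..m} \<Longrightarrow> x \<in> space lam \<Longrightarrow> \<bar>fk k x\<bar> \<le> sqrt (C k * D k)"
    and eps_pos: "eps > 0"
    and beta1: "\<And>k. k \<in> {1..m} \<Longrightarrow> 0 < beta1 k \<and> beta1 k < real N / sqrt (C k * D k)"
    and beta2: "\<And>k. k \<in> {1..m} \<Longrightarrow> 0 < beta2 k \<and> beta2 k < real N / sqrt (C k * D k)"
  shows "measure (PiM {..<N} (\<lambda>_. P))
           {\<omega> \<in> space (PiM {..<N} (\<lambda>_. P)).
              \<forall>k \<in> {1..m}.
                alpha_inf N m (D k) eps (beta1 k) (\<lambda>i. fk k (\<omega> i)) \<le> alpha_bar lam f (fk k)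
              \<and> alpha_bar lam f (fk k) \<le> alpha_sup N m (D k) eps (beta2 k) (\<lambda>i. fk k (\<omega> i))}
         \<ge> 1 - eps"
proof -
  define M where "M = PiM {..<N} (\<lambda>_. P)"
  interpret M: prob_space M
    unfolding M_def using P_prob by (rule prob_space_PiM)
  define good where "good k \<omega> \<longleftrightarrow>
      alpha_inf N m (D k) eps (beta1 k) (\<lambda>i. fk k (\<omega> i)) \<le> alpha_bar lam f (fk k)
    \<and> alpha_bar lam f (fk k) \<le> alpha_sup N m (D k) eps (beta2 k) (\<lambda>i. fk k (\<omega> i))" for k \<omega>
  have sets_P: "sets P = sets lam" "space P = space lam"
    by (simp_all add: P_def)
  have "Measurable.pred M (good k) \<and> (\<exists>A \<in> sets M. measure M A \<le> eps / real m \<and> (\<forall>\<omega> \<in> space M - A. good k \<omega>))"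
    if k: "k \<in> {1..m}" for k
  proof -
    have fk_meas_P: "fk k \<in> borel_measurable P"
      using fk_meas[OF k] measurable_cong_sets[OF sets_P(1) refl] by blast
    have fk_bound_P: "\<bar>fk k x\<bar> \<le> sqrt (C k * D k)" if "x \<in> space P" for x
      using fk_bound[OF k] that sets_P by simp
    have "0 < sqrt (C k * D k)"
      using C_pos[OF k] D_pos[OF k] by simp
    then have beta_bounds: "0 < beta1 k" "beta1 k * sqrt (C k * D k) < real N"
      "0 < beta2 k" "beta2 k * sqrt (C k * D k) < real N"
      using beta1[OF k] beta2[OF k] by (simp_all add: pos_less_divide_eq)
    have mean_eq: "(\<integral>x. fk k x \<partial>P) = D k * alpha_bar lam f (fk k)"
      using integral_density_eq_alpha_bar[OF f_meas f_nonneg fk_meas[OF k]] D_pos[OF k]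
      by (simp add: P_def D_def[OF k])
    have "0 < m"
      using k by simp
    then show ?thesis
      using alpha_bounds_fail_rarely[OF P_prob fk_meas_P fk_bound_P beta_bounds D_pos[OF k] mean_eq eps_pos]
      unfolding good_def[abs_def] M_def by (intro conjI)
  qed
  then have "1 - card {1..m} * (eps / real m) \<le> measure M {\<omega> \<in> space M. \<forall>k \<in> {1..m}. good k \<omega>}"
    by (intro M.prob_all_ge_by_union_bound) simp_all
  moreover have "card {1..m} * (eps / real m) \<le> eps"
    using eps_pos by (cases "m = 0") auto
  ultimately show ?thesis
    unfolding M_def good_def by linarith
qed

end
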